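(* Let $n\ge1$ be an integer and write $n=2m+p$ with integers $m\ge0$ and $p\in\{0,1\}$ (when $p=0$ we have $m\ge1$). Let $R_n$ be the $n$-row rhombus of coins and $R_n^{\mathrm{flip}}$ its horizontal mirror image, as defined in the context. Then the minimum number of moves needed to turn $R_n$ into a translate of $R_n^{\mathrm{flip}}$ is $$\mu(R_n,R_n^{\mathrm{flip}})=\begin{cases}2T_m=m^2+m, & p=1,\\ T_m+T_{m-1}=m^2, & p=0.\end{cases}$$ In both cases this equals $\lfloor n^2/4\rfloor$.
   Context: For an integer $k\ge 0$, $T_k=k(k+1)/2$ is the $k$-th triangular number, so $T_0=0$. Coins are placed at points of the triangular lattice $L=\{a\mathbf u+b\mathbf v: a,b\in\mathbb Z\}\subset\mathbb R^2$, where $\mathbf u=(1,0)$ and $\mathbf v=(1/2,\sqrt3/2)$. The $n$-row rhombus of coins is $R_n=\{a\mathbf u+b\mathbf v: a,b\in\{0,1,\dots,n-1\}\}$. It has $n^2$ coins. Its horizontal flip is $R_n^{\mathrm{flip}}=\{(-x,y):(x,y)\in R_n\}$, the mirror image of $R_n$ in a vertical line. This set is again contained in $L$. A move takes a single coin and places it at any other position. For finite sets $S,S'\subset\mathbb R^2$ with $|S|=|S'|$, the minimum number of moves to transform $S$ into some translate of $S'$ is $\mu(S,S')=|S|-\max_{t\in\mathbb R^2}|S\cap(S'+t)|$. Coins in the overlap stay in place, and each remaining coin is moved once. *)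

theory Defs
  imports Complex_Main
begin

definition tri :: "nat \<Rightarrow> nat" where
  "tri k = k * (k + 1) div 2"

definition lattice_pt :: "int \<Rightarrow> int \<Rightarrow> real \<times> real" where
  "lattice_pt a b = (real_of_int a + real_of_int b / 2, real_of_int b * sqrt 3 / 2)"

definition rhombus :: "nat \<Rightarrow> (real \<times> real) set" where
  "rhombus n = {lattice_pt (int a) (int b) | a b. a < n \<and> b < n}"

definition hflip :: "(real \<times> real) set \<Rightarrow> (real \<times> real) set" where
  "hflip S = (\<lambda>(x, y). (- x, y)) ` S"

definition translate :: "real \<times> real \<Rightarrow> (real \<times> real) set \<Rightarrow> (real \<times> real) set" where
  "translate t S = (\<lambda>(x, y). (x + fst t, y + snd t)) ` S"

definition moves :: "(real \<times> real) set \<Rightarrow> (real \<times> real) set \<Rightarrow> nat" where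
  "moves S S' = card S - Max {card (S \<inter> translate t S') | t. True}"

end

theory Submission
  imports Defs
begin

text \<open>Index lattice points by row b and column a. The mirror image of R_n translated by a
lattice vector consists of n consecutive rows, in each of which a + b ranges over a window
k - n < a + b \<le> k with k independent of the row; an overlap with R_n already forces the translation to be a lattice vector.
So the overlap lies in the strip k - n < a + b \<le> k of the n \<times> n grid, whose row b misses
min n \<bar>k - n + 1 - b\<bar> points. Pairing row b with row n - 1 - b, the triangle inequality
bounds the total deficit from below by (\<Sum>b<n. \<bar>n - 1 - 2b\<bar>) / 2 = \<lfloor>n^2/4\<rfloor>,
with equality for the centred strip k - n + 1 = \<lfloor>n/2\<rfloor>.\<close>

lemma sum_abs_centred_offsets:
  "(\<Sum>b<n. \<bar>int n - 1 - 2 * int b\<bar>) = 2 * int (n\<^sup>2 div 4)"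
proof (induction n rule: nat_induct2)
  case (step k)
  have "(\<Sum>b<k + 2. \<bar>int (k + 2) - 1 - 2 * int b\<bar>)
      = \<bar>int k + 1\<bar> + (\<Sum>b<Suc k. \<bar>int k - 1 - 2 * int b\<bar>)"
    using sum.lessThan_Suc_shift[of "\<lambda>b. \<bar>int (k + 2) - 1 - 2 * int b\<bar>" "Suc k"]
    by (simp add: algebra_simps)
  also have "\<dots> = 2 * (int k + 1) + (\<Sum>b<k. \<bar>int k - 1 - 2 * int b\<bar>)"
    by simp
  finally have sum_step: "(\<Sum>b<k + 2. \<bar>int (k + 2) - 1 - 2 * int b\<bar>)
      = 2 * (int k + 1) + (\<Sum>b<k. \<bar>int k - 1 - 2 * int b\<bar>)" .
  have "(k + 2)\<^sup>2 div 4 = k\<^sup>2 div 4 + (k + 1)"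
    by (simp add: power2_eq_square algebra_simps)
  then show ?case
    using sum_step step.IH by simp
qed simp_all

lemma sum_reflect_pairs:
  fixes f :: "nat \<Rightarrow> 'a::comm_semiring_1"
  shows "2 * (\<Sum>b<n. f b) = (\<Sum>b<n. f b + f (n - Suc b))"
  by (simp add: sum.distrib sum.nat_diff_reindex mult_2)

lemma row_deficits_lower_bound:
  "int (n\<^sup>2 div 4) \<le> (\<Sum>b<n. min (int n) \<bar>c - int b\<bar>)"
proof -
  have "\<bar>int n - 1 - 2 * int b\<bar> \<le> min (int n) \<bar>c - int b\<bar> + min (int n) \<bar>c - int (n - Suc b)\<bar>"
    if "b < n" for b
    using that by (simp add: min_def abs_if)
  then have "(\<Sum>b<n. \<bar>int n - 1 - 2 * int b\<bar>) \<le> 2 * (\<Sum>b<n. min (int n) \<bar>c - int b\<bar>)"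
    unfolding sum_reflect_pairs by (intro sum_mono) simp
  then show ?thesis
    using sum_abs_centred_offsets[of n] by simp
qed

lemma row_deficits_centred:
  "(\<Sum>b<n. min (int n) \<bar>int (n div 2) - int b\<bar>) = int (n\<^sup>2 div 4)"
proof -
  have "min (int n) \<bar>int (n div 2) - int b\<bar> + min (int n) \<bar>int (n div 2) - int (n - Suc b)\<bar>
      = \<bar>int n - 1 - 2 * int b\<bar>" if "b < n" for b
  proof -
    have "2 * int (n div 2) \<le> int n" "int n \<le> 2 * int (n div 2) + 1"
      by linarith+
    then show ?thesis
      using that by (simp add: min_def abs_if split: if_splits; presburger)
  qed
  then have "2 * (\<Sum>b<n. min (int n) \<bar>int (n div 2) - int b\<bar>) = (\<Sum>b<n. \<bar>int n - 1 - 2 * int b\<bar>)"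
    unfolding sum_reflect_pairs by (intro sum.cong) simp_all
  then show ?thesis
    using sum_abs_centred_offsets[of n] by simp
qed

definition row_col_pt :: "int \<times> int \<Rightarrow> real \<times> real" where
  "row_col_pt x = lattice_pt (snd x) (fst x)"

definition grid :: "nat \<Rightarrow> (int \<times> int) set" where
  "grid n = {0..<int n} \<times> {0..<int n}"

lemma inj_row_col_pt: "inj row_col_pt"
proof (rule injI)
  fix x y
  assume "row_col_pt x = row_col_pt y"
  then have "real_of_int (snd x) + real_of_int (fst x) / 2
      = real_of_int (snd y) + real_of_int (fst y) / 2"
    and "fst x = fst y"
    by (auto simp: row_col_pt_def lattice_pt_def)
  then show "x = y"
    by (simp add: prod_eq_iff)
qed

lemma card_image_row_col_pt: "card (row_col_pt ` A) = card A"
  using inj_row_col_pt by (simp add: card_image inj_on_subset)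

lemma rhombus_eq_image_grid: "rhombus n = row_col_pt ` grid n"
proof (intro set_eqI iffI)
  fix x
  assume "x \<in> rhombus n"
  then obtain a b where "x = lattice_pt (int a) (int b)" "a < n" "b < n"
    by (auto simp: rhombus_def)
  then show "x \<in> row_col_pt ` grid n"
    by (intro image_eqI[of _ _ "(int b, int a)"]) (auto simp: grid_def row_col_pt_def)
next
  fix x
  assume "x \<in> row_col_pt ` grid n"
  then obtain b a where "x = row_col_pt (b, a)" "0 \<le> a" "a < int n" "0 \<le> b" "b < int n"
    by (auto simp: grid_def)
  then have "x = lattice_pt (int (nat a)) (int (nat b))" "nat a < n" "nat b < n"
    by (auto simp: row_col_pt_def)
  then show "x \<in> rhombus n"
    unfolding rhombus_def by blast
qed

lemma card_rhombus: "card (rhombus n) = n\<^sup>2"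
  by (simp add: rhombus_eq_image_grid card_image_row_col_pt grid_def power2_eq_square)

lemma hflip_image_row_col_pt:
  "hflip (row_col_pt ` A) = row_col_pt ` (\<lambda>(b, a). (b, - a - b)) ` A"
  unfolding hflip_def image_image
  by (rule image_cong) (auto simp: row_col_pt_def lattice_pt_def field_simps)

lemma translate_image_row_col_pt:
  "translate (row_col_pt (u, s)) (row_col_pt ` A) = row_col_pt ` (\<lambda>(b, a). (b + u, a + s)) ` A"
  unfolding translate_def image_image
  by (rule image_cong) (auto simp: row_col_pt_def lattice_pt_def field_simps)

lemma translate_row_col_pt_diff:
  assumes "row_col_pt x = (fst (row_col_pt y) + fst t, snd (row_col_pt y) + snd t)"
  shows "t = row_col_pt (fst x - fst y, snd x - snd y)"
  using assms by (cases t) (auto simp: row_col_pt_def lattice_pt_def field_simps)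

definition mirrored_grid :: "nat \<Rightarrow> int \<Rightarrow> int \<Rightarrow> (int \<times> int) set" where
  "mirrored_grid n u s =
     {(b, a). 0 \<le> b - u \<and> b - u < int n \<and> 0 \<le> s + u - a - b \<and> s + u - a - b < int n}"

lemma translate_hflip_rhombus:
  "translate (row_col_pt (u, s)) (hflip (rhombus n)) = row_col_pt ` mirrored_grid n u s"
proof -
  have "(\<lambda>(b, a). (b + u, a + s)) ` (\<lambda>(b, a). (b, - a - b)) ` grid n = mirrored_grid n u s"
  proof (intro set_eqI iffI)
    fix x
    assume "x \<in> mirrored_grid n u s"
    then obtain b a where "x = (b, a)" "(b - u, s + u - a - b) \<in> grid n"
      by (auto simp: mirrored_grid_def grid_def)
    then show "x \<in> (\<lambda>(b, a). (b + u, a + s)) ` (\<lambda>(b, a). (b, - a - b)) ` grid n"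
      by (force simp: image_image)
  qed (auto simp: mirrored_grid_def grid_def)
  then show ?thesis
    by (simp add: rhombus_eq_image_grid hflip_image_row_col_pt translate_image_row_col_pt)
qed

lemma card_rhombus_inter_translate:
  "card (rhombus n \<inter> translate (row_col_pt (u, s)) (hflip (rhombus n)))
     = card (grid n \<inter> mirrored_grid n u s)"
  unfolding translate_hflip_rhombus
  by (simp add: rhombus_eq_image_grid image_Int[OF inj_row_col_pt, symmetric] card_image_row_col_pt)

lemma translate_lattice_vector_of_overlap:
  assumes "rhombus n \<inter> translate t (hflip (rhombus n)) \<noteq> {}"
  obtains u s where "t = row_col_pt (u, s)"
proof -
  from assms obtain x
    where "row_col_pt x \<in> translate t (row_col_pt ` (\<lambda>(b, a). (b, - a - b)) ` grid n)"
    unfolding rhombus_eq_image_grid hflip_image_row_col_pt by blast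
  then obtain y where "row_col_pt x = (fst (row_col_pt y) + fst t, snd (row_col_pt y) + snd t)"
    unfolding translate_def by (auto simp: split_beta)
  then show ?thesis
    using that translate_row_col_pt_diff by blast
qed

definition strip :: "nat \<Rightarrow> int \<Rightarrow> (int \<times> int) set" where
  "strip n k = {x \<in> grid n. k - int n < fst x + snd x \<and> fst x + snd x \<le> k}"

lemma strip_eq_Sigma:
  "strip n k = (SIGMA b:{0..<int n}. {max 0 (k - int n - b + 1) .. min (int n - 1) (k - b)})"
  by (auto simp: strip_def grid_def)

lemma card_strip:
  "int (card (strip n k)) = int n * int n - (\<Sum>b<n. min (int n) \<bar>k - int n + 1 - int b\<bar>)"
proof -
  have row: "int (card {max 0 (k - int n - b + 1) .. min (int n - 1) (k - b)})
      = int n - min (int n) \<bar>k - int n + 1 - b\<bar>" for b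
    by (simp add: min_def max_def abs_if)
  have "int (card (strip n k))
      = (\<Sum>b\<in>{0..<int n}. int (card {max 0 (k - int n - b + 1) .. min (int n - 1) (k - b)}))"
    unfolding strip_eq_Sigma by (subst card_SigmaI) auto
  also have "\<dots> = (\<Sum>b\<in>{0..<int n}. int n - min (int n) \<bar>k - int n + 1 - b\<bar>)"
    by (simp only: row)
  also have "\<dots> = (\<Sum>b<n. int n - min (int n) \<bar>k - int n + 1 - int b\<bar>)"
  proof -
    have "{0..<int n} = int ` {..<n}"
      using image_int_atLeastLessThan[of 0 n] by (simp add: lessThan_atLeast0)
    then show ?thesis
      by (simp add: sum.reindex)
  qed
  finally show ?thesis
    by (simp add: sum_subtractf)
qed

lemma int_square_minus_quarter: "int (n\<^sup>2 - n\<^sup>2 div 4) = int n * int n - int (n\<^sup>2 div 4)"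
  by (simp add: power2_eq_square)

lemma card_strip_le: "card (strip n k) \<le> n\<^sup>2 - n\<^sup>2 div 4"
  using card_strip[of n k] row_deficits_lower_bound[of n "k - int n + 1"]
    int_square_minus_quarter[of n]
  by linarith

lemma card_strip_centred: "card (strip n (int (n div 2) + int n - 1)) = n\<^sup>2 - n\<^sup>2 div 4"
proof -
  have "int (card (strip n (int (n div 2) + int n - 1))) = int n * int n - int (n\<^sup>2 div 4)"
    using card_strip[of n "int (n div 2) + int n - 1"] row_deficits_centred[of n] by simp
  then show ?thesis
    using int_square_minus_quarter[of n] by linarith
qed

lemma card_rhombus_inter_translate_le:
  "card (rhombus n \<inter> translate t (hflip (rhombus n))) \<le> n\<^sup>2 - n\<^sup>2 div 4"
proof (cases "rhombus n \<inter> translate t (hflip (rhombus n)) = {}")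
  case False
  then obtain u s where t: "t = row_col_pt (u, s)"
    by (rule translate_lattice_vector_of_overlap)
  have "grid n \<inter> mirrored_grid n u s \<subseteq> strip n (s + u)"
    by (auto simp: strip_def grid_def mirrored_grid_def)
  then have "card (grid n \<inter> mirrored_grid n u s) \<le> card (strip n (s + u))"
    by (rule card_mono[rotated]) (simp add: strip_def grid_def)
  then show ?thesis
    using card_strip_le[of n "s + u"] by (simp add: t card_rhombus_inter_translate)
qed simp

lemma card_rhombus_inter_translate_centred:
  "card (rhombus n \<inter> translate (row_col_pt (0, int (n div 2) + int n - 1)) (hflip (rhombus n)))
     = n\<^sup>2 - n\<^sup>2 div 4"
proof -
  have "grid n \<inter> mirrored_grid n 0 k = strip n k" for k
    by (auto simp: strip_def grid_def mirrored_grid_def)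
  then show ?thesis
    by (simp add: card_rhombus_inter_translate card_strip_centred)
qed

lemma moves_rhombus_hflip: "moves (rhombus n) (hflip (rhombus n)) = n\<^sup>2 div 4"
proof -
  let ?overlaps = "{card (rhombus n \<inter> translate t (hflip (rhombus n))) | t. True}"
  have "Max ?overlaps = n\<^sup>2 - n\<^sup>2 div 4"
  proof (rule Max_eqI)
    show "finite ?overlaps"
      by (rule finite_subset[of _ "{..n\<^sup>2}"])
        (auto intro: order_trans[OF card_rhombus_inter_translate_le])
    show "y \<le> n\<^sup>2 - n\<^sup>2 div 4" if "y \<in> ?overlaps" for y
      using that card_rhombus_inter_translate_le by auto
    show "n\<^sup>2 - n\<^sup>2 div 4 \<in> ?overlaps"
      using card_rhombus_inter_translate_centred[of n, symmetric] by blast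
  qed
  then show ?thesis
    by (simp add: moves_def card_rhombus)
qed

lemma square_div_4_eq_tri:
  fixes n m p :: nat
  assumes "n \<ge> 1" and "n = 2 * m + p" and "p \<in> {0, 1}"
  shows "n\<^sup>2 div 4 = (if p = 1 then 2 * tri m else tri m + tri (m - 1))"
proof (cases "p = 1")
  case True
  then have "n\<^sup>2 = 4 * (m * m + m) + 1"
    using assms(2) by (simp add: power2_eq_square algebra_simps)
  then show ?thesis
    using True by (simp add: tri_def)
next
  case False
  with assms obtain j where "p = 0" "m = Suc j"
    by (cases m) auto
  then have "n\<^sup>2 div 4 = m * m" "2 * (tri m + tri (m - 1)) = 2 * (m * m)"
    using assms(2) by (simp_all add: power2_eq_square tri_def algebra_simps)
  then show ?thesis
    using False by simp
qed

theorem mainTheorem2: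
  fixes n m p :: nat
  assumes "n \<ge> 1" and "n = 2 * m + p" and "p \<in> {0, 1}"
  shows "moves (rhombus n) (hflip (rhombus n)) =
           (if p = 1 then 2 * tri m else tri m + tri (m - 1))
       \<and> moves (rhombus n) (hflip (rhombus n)) = n ^ 2 div 4"
  using square_div_4_eq_tri[OF assms] moves_rhombus_hflip[of n] by simp

end
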